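(* Let $T\ge 3$ be an integer, let $M>1$, $\alpha\in(0,1)$ and $g(\alpha)\in(0,1)$, and set $g(0)=1$, $g(1)=0$. Let $x_1,\dots,x_T\in\{0,1\}$ (request arrivals) and let $c_1,\dots,c_T$ be real numbers with $0<c_{\min}\le c_t\le c_{\max}$ (rent costs). For a hosting sequence $r=(r_1,\dots,r_T)\in\{0,\alpha,1\}^T$ define its total cost $$C(r)=\sum_{t=1}^{T}\bigl(c_t r_t+g(r_t)x_t\bigr)+\sum_{t=1}^{T-1}M\,(r_{t+1}-r_t)^+ .$$ Let $r^*=(r^*_1,\dots,r^*_T)$ be an optimal offline hosting sequence, i.e. a minimizer of $C$ over all sequences in $\{0,\alpha,1\}^T$ (with the same prescribed initial value $r_1$ as the competing sequences). Let $(a,b)\in\{(0,\alpha),(0,1),(\alpha,1-\alpha)\}$ and let $2\le n\le m\le T-1$. If $r^*_{n-1}=a$, $r^*_t=a+b$ for all $n\le t\le m$, and $r^*_{m+1}=a$, then $$\bigl(g(a)-g(a+b)\bigr)\sum_{l=n}^{m}x_l\;\ge\; bM+b\sum_{l=n}^{m}c_l .$$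
   Context: This is the offline version of a partial service hosting problem at an edge server: in each time-slot $t$ a fraction $r_t\in\{0,\alpha,1\}$ of a service is hosted at the edge; hosting incurs rent $c_t r_t$, each request arriving in slot $t$ costs $g(r_t)$ to serve (the part not served at the edge), and increasing the hosted fraction from $r_t$ to $r_{t+1}$ incurs a fetch cost $M(r_{t+1}-r_t)^+$ (decreasing it is free). The offline optimal policy knows all $x_t$ and $c_t$ in advance and minimizes the total cost $C(r)$. *)

theory Defs
  imports Complex_Main
begin

definition total_cost ::
  "nat \<Rightarrow> real \<Rightarrow> (real \<Rightarrow> real) \<Rightarrow> (nat \<Rightarrow> real) \<Rightarrow> (nat \<Rightarrow> real) \<Rightarrow> (nat \<Rightarrow> real) \<Rightarrow> real" where
  "total_cost T M g x c r =
     (\<Sum>t\<in>{1..T}. c t * r t + g (r t) * x t)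
     + (\<Sum>t\<in>{1..<T}. M * max 0 (r (t+1) - r t))"

definition admissible :: "nat \<Rightarrow> real \<Rightarrow> (nat \<Rightarrow> real) \<Rightarrow> bool" where
  "admissible T \<alpha> r \<longleftrightarrow> (\<forall>t\<in>{1..T}. r t \<in> {0, \<alpha>, 1})"

end

theory Submission
  imports Defs
begin

text \<open>If the optimal sequence raises its hosted fraction from \<open>a\<close> to \<open>a + b\<close> for the block of
  slots \<open>n..m\<close> and falls back to \<open>a\<close> afterwards, compare it with the sequence that stays at \<open>a\<close>
  throughout the block. The block costs the extra rent \<open>b c\<^sub>l\<close> in every slot plus one fetch \<open>b M\<close>
  at its start (the drop at its end is free), and saves \<open>g a - g (a + b)\<close> per request.
  Optimality says the savings pay for the extra costs, which is the claimed inequality.\<close>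

lemma stage_cost_override_block:
  fixes r c x :: "nat \<Rightarrow> real" and g :: "real \<Rightarrow> real"
  assumes "{n..m} \<subseteq> {1..T}" and "\<forall>t\<in>{n..m}. r t = a + b"
  shows "(\<Sum>t\<in>{1..T}. c t * r t + g (r t) * x t)
       = (\<Sum>t\<in>{1..T}. c t * override_on r (\<lambda>_. a) {n..m} t + g (override_on r (\<lambda>_. a) {n..m} t) * x t)
         + b * (\<Sum>t\<in>{n..m}. c t) + (g (a + b) - g a) * (\<Sum>t\<in>{n..m}. x t)"
proof -
  let ?r' = "override_on r (\<lambda>_. a) {n..m}"
  let ?stage = "\<lambda>r t. c t * r t + g (r t) * x t"
  have "(\<Sum>t\<in>{1..T}. ?stage r t) - (\<Sum>t\<in>{1..T}. ?stage ?r' t)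
      = (\<Sum>t\<in>{1..T}. ?stage r t - ?stage ?r' t)"
    by (rule sum_subtractf[symmetric])
  also have "\<dots> = (\<Sum>t\<in>{n..m}. ?stage r t - ?stage ?r' t)"
    by (rule sum.mono_neutral_right) (use assms(1) in \<open>auto simp: override_on_def\<close>)
  also have "\<dots> = (\<Sum>t\<in>{n..m}. b * c t + (g (a + b) - g a) * x t)"
    by (rule sum.cong) (use assms(2) in \<open>auto simp: override_on_def algebra_simps\<close>)
  also have "\<dots> = b * (\<Sum>t\<in>{n..m}. c t) + (g (a + b) - g a) * (\<Sum>t\<in>{n..m}. x t)"
    by (simp add: sum.distrib sum_distrib_left)
  finally show ?thesis by simp
qed

lemma fetch_cost_override_block:
  fixes r :: "nat \<Rightarrow> real"
  assumes "2 \<le> n" and "n \<le> m" and "m < T" and "0 \<le> b"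
    and "r (n - 1) = a" and "\<forall>t\<in>{n..m}. r t = a + b" and "r (m + 1) = a"
  shows "(\<Sum>t\<in>{1..<T}. M * max 0 (r (t + 1) - r t))
       = (\<Sum>t\<in>{1..<T}. M * max 0 (override_on r (\<lambda>_. a) {n..m} (t + 1) - override_on r (\<lambda>_. a) {n..m} t))
         + M * b"
proof -
  let ?r' = "override_on r (\<lambda>_. a) {n..m}"
  let ?fetch = "\<lambda>r t. M * max 0 (r (t + 1) - r t)"
  have fetch_diff: "?fetch r t - ?fetch ?r' t = (if t = n - 1 then M * b else 0)" for t
  proof -
    consider "t + 1 < n" | "t + 1 = n" | "n \<le> t" "t < m" | "t = m" | "m < t"
      by linarith
    then show ?thesis
      by cases (use assms in \<open>auto simp: override_on_def\<close>)
  qed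
  have "n - 1 \<in> {1..<T}" using assms(1-3) by auto
  then have "(\<Sum>t\<in>{1..<T}. ?fetch r t - ?fetch ?r' t) = M * b"
    by (simp only: fetch_diff) (simp add: sum.delta)
  then show ?thesis by (simp add: sum_subtractf)
qed

lemma total_cost_override_block:
  assumes "2 \<le> n" and "n \<le> m" and "m < T" and "0 \<le> b"
    and "r (n - 1) = a" and "\<forall>t\<in>{n..m}. r t = a + b" and "r (m + 1) = a"
  shows "total_cost T M g x c r
       = total_cost T M g x c (override_on r (\<lambda>_. a) {n..m})
         + b * M + b * (\<Sum>t\<in>{n..m}. c t) + (g (a + b) - g a) * (\<Sum>t\<in>{n..m}. x t)"
proof -
  have "{n..m} \<subseteq> {1..T}" using assms(1-3) by auto
  then show ?thesis
    using stage_cost_override_block[OF _ assms(6), of T c g x]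
      fetch_cost_override_block[OF assms, of M]
    unfolding total_cost_def by (simp add: algebra_simps)
qed

lemma admissible_override_on:
  assumes "admissible T \<alpha> r" and "a \<in> {0, \<alpha>, 1}"
  shows "admissible T \<alpha> (override_on r (\<lambda>_. a) I)"
  using assms unfolding admissible_def override_on_def by auto

theorem mainTheorem1:
  fixes T :: nat and M \<alpha> cmin cmax a b :: real and g :: "real \<Rightarrow> real"
    and x c rs :: "nat \<Rightarrow> real" and n m :: nat
  assumes "T \<ge> 3" and "M > 1" and "0 < \<alpha>" and "\<alpha> < 1"
    and "0 < g \<alpha>" and "g \<alpha> < 1" and "g 0 = 1" and "g 1 = 0"
    and "\<forall>t\<in>{1..T}. x t \<in> {0, 1}"
    and "0 < cmin" and "\<forall>t\<in>{1..T}. cmin \<le> c t \<and> c t \<le> cmax"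
    and "admissible T \<alpha> rs"
    and "\<forall>r. admissible T \<alpha> r \<and> r 1 = rs 1 \<longrightarrow> total_cost T M g x c rs \<le> total_cost T M g x c r"
    and "(a, b) \<in> {(0, \<alpha>), (0, 1), (\<alpha>, 1 - \<alpha>)}"
    and "2 \<le> n" and "n \<le> m" and "m \<le> T - 1"
    and "rs (n - 1) = a" and "\<forall>t\<in>{n..m}. rs t = a + b" and "rs (m + 1) = a"
  shows "(g a - g (a + b)) * (\<Sum>l\<in>{n..m}. x l) \<ge> b * M + b * (\<Sum>l\<in>{n..m}. c l)"
proof -
  let ?r' = "override_on rs (\<lambda>_. a) {n..m}"
  have "0 \<le> b" and "a \<in> {0, \<alpha>, 1}" using assms(3,4,14) by auto
  have "m < T" using assms(1,17) by linarith
  have "admissible T \<alpha> ?r'"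
    using admissible_override_on[OF assms(12) \<open>a \<in> {0, \<alpha>, 1}\<close>] .
  moreover have "?r' 1 = rs 1" using assms(15) by (simp add: override_on_def)
  ultimately have "total_cost T M g x c rs \<le> total_cost T M g x c ?r'"
    using assms(13) by blast
  then show ?thesis
    using total_cost_override_block[OF assms(15,16) \<open>m < T\<close> \<open>0 \<le> b\<close> assms(18-20), of M g x c]
    by (simp add: algebra_simps)
qed

end
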